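(* Let $X$ be a set of reals. Then $B(X)$ satisfies $S_{1}(\mathcal{D},\mathcal{D})$ if and only if $X$ satisfies $S_{1}(B_\Omega, B_\Omega)$.
   Context: $B(X)$ is the set of all real-valued Borel functions on $X$ with the topology of pointwise convergence. $S_1(\mathcal{A},\mathcal{B})$ means: for every sequence $(A_n:n\in\mathbb{N})$ of elements of $\mathcal{A}$ there are $b_n\in A_n$ with $\{b_n:n\in\mathbb{N}\}\in\mathcal{B}$. For the space $B(X)$, $\mathcal{D}$ is the family of all countable dense subsets of $B(X)$. A cover $\mathcal{U}$ of $X$ is an $\omega$-cover if $X\notin\mathcal{U}$ and every finite subset of $X$ is contained in some member of $\mathcal{U}$; $B_\Omega$ is the family of all countable $\omega$-covers of $X$ consisting of Borel sets. *)

theory Defs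
  imports "HOL-Analysis.Analysis"
begin

definition S1 :: "'a set set \<Rightarrow> 'a set set \<Rightarrow> bool" where
  "S1 \<A> \<B> \<longleftrightarrow>
     (\<forall>A :: nat \<Rightarrow> 'a set. (\<forall>n. A n \<in> \<A>) \<longrightarrow>
        (\<exists>b :: nat \<Rightarrow> 'a. (\<forall>n. b n \<in> A n) \<and> range b \<in> \<B>))"

text \<open>B(X): real-valued Borel functions on X (X with the subspace Borel structure),
  represented as functions extensional on X (undefined outside X).\<close>
definition Borel_functions :: "real set \<Rightarrow> (real \<Rightarrow> real) set" where
  "Borel_functions X =
     {f. f \<in> extensional X \<and> f \<in> borel_measurable (restrict_space borel X)}"

definition BX_top :: "real set \<Rightarrow> (real \<Rightarrow> real) topology" where
  "BX_top X = subtopology (product_topology (\<lambda>_. euclideanreal) X) (Borel_functions X)"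

definition dense_in :: "'a topology \<Rightarrow> 'a set \<Rightarrow> bool" where
  "dense_in T D \<longleftrightarrow> D \<subseteq> topspace T \<and> T closure_of D = topspace T"

definition countable_dense :: "'a topology \<Rightarrow> 'a set set" where
  "countable_dense T = {D. countable D \<and> dense_in T D}"

definition Borel_omega_covers :: "real set \<Rightarrow> real set set set" where
  "Borel_omega_covers X =
     {U. countable U \<and> (\<forall>u\<in>U. u \<in> sets (restrict_space borel X)) \<and> \<Union>U = X \<and>
         X \<notin> U \<and> (\<forall>F. finite F \<and> F \<subseteq> X \<longrightarrow> (\<exists>u\<in>U. F \<subseteq> u))}"

end

theory Submission
  imports Defs
begin

text \<open>
  For the forward direction, fix a countable dense set of rational step functions and turn a
  Borel \<open>\<omega>\<close>-cover \<open>U\<close> into the dense set of functions that agree with a step function on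
  some \<open>u \<in> U\<close> and equal 1 on \<open>X - u\<close>. A dense selection from these sets approximates the
  zero function within 1 on each finite \<open>F \<subseteq> X\<close>, which forces \<open>F\<close> into the selected \<open>u\<close>.

  For the converse, splitting \<open>\<nat>\<close> into infinitely many infinite pieces reduces the problem
  to selecting \<open>c m \<in> D m\<close> that accumulate at a single Borel function \<open>f\<close>. If infinitely
  many \<open>D m\<close> contain a function uniformly within \<open>1/(m+1)\<close> of \<open>f\<close>, these do. Otherwise,
  from some index on, the sets \<open>{x. \<bar>g x - f x\<bar> < 1/(m+1)}\<close> with \<open>g \<in> D m\<close> form Borel
  \<open>\<omega>\<close>-covers; selecting one set from each yields again an \<open>\<omega>\<close>-cover not containing \<open>X\<close>,
  so every finite set lies in selected sets of arbitrarily large index.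
\<close>

lemma in_closure_of_product_topology_metric:
  fixes f :: "'a \<Rightarrow> 'b::metric_space"
  shows "f \<in> product_topology (\<lambda>_. euclidean) I closure_of S \<longleftrightarrow>
    f \<in> extensional I \<and>
    (\<forall>F e. finite F \<longrightarrow> F \<subseteq> I \<longrightarrow> e > 0 \<longrightarrow>
       (\<exists>g\<in>S \<inter> extensional I. \<forall>x\<in>F. dist (g x) (f x) < e))"
    (is "?lhs \<longleftrightarrow> ?ext \<and> ?approx")
proof
  assume f: ?lhs
  show "?ext \<and> ?approx"
  proof (intro conjI allI impI)
    show ?ext using f by (simp add: in_closure_of PiE_def)
    fix F e assume "finite F" "F \<subseteq> I" "(e::real) > 0"
    define T where "T = PiE I (\<lambda>i. if i \<in> F then ball (f i) e else UNIV)"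
    have "openin (product_topology (\<lambda>_. euclidean) I) T"
      unfolding T_def openin_PiE_gen
      by (rule disjI2, intro conjI ballI finite_subset[OF _ \<open>finite F\<close>]) auto
    moreover have "f \<in> T"
      using \<open>?ext\<close> \<open>e > 0\<close> by (simp add: T_def PiE_def)
    ultimately obtain g where "g \<in> S" "g \<in> T"
      using f by (auto simp: in_closure_of)
    then show "\<exists>g\<in>S \<inter> extensional I. \<forall>x\<in>F. dist (g x) (f x) < e"
      using \<open>F \<subseteq> I\<close> by (force simp: T_def PiE_def Pi_def dist_commute)
  qed
next
  assume f: "?ext \<and> ?approx"
  show ?lhs
    unfolding in_closure_of
  proof (intro conjI allI impI)
    show "f \<in> topspace (product_topology (\<lambda>_. euclidean) I)"
      using f by (simp add: PiE_def)
    fix T assume T: "f \<in> T \<and> openin (product_topology (\<lambda>_. euclidean) I) T"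
    then obtain U where U: "finite {i \<in> I. U i \<noteq> UNIV}" "\<forall>i\<in>I. open (U i)"
      "f \<in> Pi\<^sub>E I U" "Pi\<^sub>E I U \<subseteq> T"
      unfolding openin_product_topology_alt by auto
    define F where "F = {i \<in> I. U i \<noteq> UNIV}"
    have "\<forall>i\<in>F. \<exists>d>0. ball (f i) d \<subseteq> U i"
      using U unfolding F_def by (auto simp: open_contains_ball PiE_def Pi_def)
    then obtain d where d: "\<And>i. i \<in> F \<Longrightarrow> d i > 0 \<and> ball (f i) (d i) \<subseteq> U i"
      by metis
    define e where "e = Min (insert 1 (d ` F))"
    have e_pos: "e > 0" and e_le: "\<And>i. i \<in> F \<Longrightarrow> e \<le> d i"
      using d U(1) by (auto simp: e_def F_def)
    then obtain g where g: "g \<in> S" "g \<in> extensional I" "\<forall>x\<in>F. dist (g x) (f x) < e"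
      using f U(1) unfolding F_def by blast
    have "g \<in> Pi\<^sub>E I U"
    proof -
      have "g i \<in> U i" if "i \<in> I" for i
      proof (cases "i \<in> F")
        case True
        then have "g i \<in> ball (f i) (d i)"
          using g(3) e_le[OF True] by (fastforce simp: dist_commute)
        then show ?thesis using d True by blast
      qed (use that F_def in auto)
      then show ?thesis using g(2) by (auto simp: PiE_def)
    qed
    then show "\<exists>y. y \<in> S \<and> y \<in> T" using g U(4) by blast
  qed
qed

lemma topspace_BX_top: "topspace (BX_top X) = Borel_functions X"
  by (auto simp: BX_top_def Borel_functions_def PiE_def)

lemma in_closure_of_BX_top:
  "f \<in> BX_top X closure_of S \<longleftrightarrow>
    f \<in> Borel_functions X \<and>
    (\<forall>F e. finite F \<longrightarrow> F \<subseteq> X \<longrightarrow> e > 0 \<longrightarrow>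
       (\<exists>g\<in>S \<inter> Borel_functions X. \<forall>x\<in>F. \<bar>g x - f x\<bar> < e))"
proof -
  have B_ext: "Borel_functions X \<subseteq> extensional X"
    by (auto simp: Borel_functions_def)
  then have "Borel_functions X \<inter> S \<inter> extensional X = S \<inter> Borel_functions X"
    by blast
  then show ?thesis
    using B_ext
    unfolding BX_top_def closure_of_subtopology Int_iff[of f] in_closure_of_product_topology_metric
      dist_real_def
    by auto
qed

lemma countable_dense_BX_top_iff:
  "D \<in> countable_dense (BX_top X) \<longleftrightarrow>
    countable D \<and> D \<subseteq> Borel_functions X \<and>
    (\<forall>h\<in>Borel_functions X. \<forall>F e. finite F \<longrightarrow> F \<subseteq> X \<longrightarrow> e > 0 \<longrightarrow>
       (\<exists>g\<in>D. \<forall>x\<in>F. \<bar>g x - h x\<bar> < e))"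
proof -
  have "dense_in (BX_top X) D \<longleftrightarrow>
      D \<subseteq> Borel_functions X \<and> Borel_functions X \<subseteq> BX_top X closure_of D"
    using closure_of_subset_topspace[of "BX_top X" D]
    by (auto simp: dense_in_def topspace_BX_top)
  also have "\<dots> \<longleftrightarrow> D \<subseteq> Borel_functions X \<and>
    (\<forall>h\<in>Borel_functions X. \<forall>F e. finite F \<longrightarrow> F \<subseteq> X \<longrightarrow> e > 0 \<longrightarrow>
       (\<exists>g\<in>D. \<forall>x\<in>F. \<bar>g x - h x\<bar> < e))"
    unfolding subset_iff[of "Borel_functions X"] in_closure_of_BX_top
    by (metis Int_absorb2)
  finally show ?thesis by (auto simp: countable_dense_def)
qed

lemma countable_dense_nonempty:
  "topspace T \<noteq> {} \<Longrightarrow> D \<in> countable_dense T \<Longrightarrow> D \<noteq> {}"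
  by (metis closure_of_empty countable_dense_def dense_in_def mem_Collect_eq)

lemma restrict_in_Borel_functions:
  "f \<in> borel_measurable (restrict_space borel X) \<Longrightarrow> restrict f X \<in> Borel_functions X"
  unfolding Borel_functions_def
  by (auto intro: measurable_cong[THEN iffD1] simp: space_restrict_space)

lemma topspace_BX_top_nonempty: "topspace (BX_top X) \<noteq> {}"
  using restrict_in_Borel_functions[of "\<lambda>_. 0" X] by (auto simp: topspace_BX_top)

lemma sets_restrict_space_borel_subset:
  "u \<in> sets (restrict_space borel X) \<Longrightarrow> u \<subseteq> X"
  using sets.sets_into_space[of u "restrict_space borel X"] by (simp add: space_restrict_space)

lemma Borel_set_dist_less:
  assumes "g \<in> Borel_functions X" "f \<in> Borel_functions X"
  shows "{x\<in>X. \<bar>g x - f x\<bar> < r} \<in> sets (restrict_space borel X)"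
proof -
  have "{x\<in>X. \<bar>g x - f x\<bar> < r} =
      (\<lambda>x. \<bar>g x - f x\<bar>) -` {..<r} \<inter> space (restrict_space borel X)"
    by (auto simp: space_restrict_space)
  also have "\<dots> \<in> sets (restrict_space borel X)"
    using assms unfolding Borel_functions_def by (intro measurable_sets[where A=borel]) auto
  finally show ?thesis .
qed

fun rat_step_function :: "(rat \<times> rat \<times> rat) list \<Rightarrow> real \<Rightarrow> real" where
  "rat_step_function [] x = 0"
| "rat_step_function ((a, b, c) # l) x =
     of_rat c * indicator {of_rat a<..<of_rat b} x + rat_step_function l x"

lemma rat_step_function_borel: "rat_step_function l \<in> borel_measurable borel"
  by (induction rule: rat_step_function.induct) auto

lemma rat_step_function_approx:
  assumes "finite F" "e > 0"
  shows "\<exists>l. \<forall>x\<in>F. \<bar>rat_step_function l x - h x\<bar> < e"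
  using assms(1)
proof (induction F rule: finite_induct)
  case (insert y F)
  then obtain l where l: "\<forall>x\<in>F. \<bar>rat_step_function l x - h x\<bar> < e"
    by blast
  define \<delta> where "\<delta> = Min (insert 1 ((\<lambda>z. \<bar>z - y\<bar>) ` F))"
  have "\<delta> > 0" and \<delta>_le: "\<And>z. z \<in> F \<Longrightarrow> \<delta> \<le> \<bar>z - y\<bar>"
    using insert by (auto simp: \<delta>_def)
  obtain a where a: "y - \<delta> < of_rat a" "of_rat a < y"
    using of_rat_dense[of "y - \<delta>" y] \<open>\<delta> > 0\<close> by auto
  obtain b where b: "y < of_rat b" "of_rat b < y + \<delta>"
    using of_rat_dense[of y "y + \<delta>"] \<open>\<delta> > 0\<close> by auto
  obtain c where c: "h y - rat_step_function l y - e < of_rat c"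
    "of_rat c < h y - rat_step_function l y + e"
    using of_rat_dense[of "h y - rat_step_function l y - e" "h y - rat_step_function l y + e"]
      \<open>e > 0\<close> by auto
  have "z \<notin> {of_rat a<..<of_rat b}" if "z \<in> F" for z
    using \<delta>_le[OF that] a b by auto
  then have "\<forall>x\<in>insert y F. \<bar>rat_step_function ((a, b, c) # l) x - h x\<bar> < e"
    using l a b c by (auto simp: abs_minus_commute)
  then show ?case by blast
qed simp

lemma ex_countable_dense_BX_top: "\<exists>P. P \<in> countable_dense (BX_top X)"
proof
  let ?P = "range (\<lambda>l. restrict (rat_step_function l) X)"
  have "?P \<subseteq> Borel_functions X"
    using restrict_in_Borel_functions measurable_restrict_space1[OF rat_step_function_borel]
    by blast
  moreover have "\<exists>p\<in>?P. \<forall>x\<in>F. \<bar>p x - h x\<bar> < e" if "finite F" "F \<subseteq> X" "e > 0" for h F e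
    using rat_step_function_approx[OF that(1,3)] that(2) by force
  ultimately show "?P \<in> countable_dense (BX_top X)"
    by (simp add: countable_dense_BX_top_iff)
qed

lemma S1E:
  fixes A :: "nat \<Rightarrow> 'a set"
  assumes "S1 \<A> \<B>" "\<And>n. A n \<in> \<A>"
  obtains b where "\<And>n. b n \<in> A n" "range b \<in> \<B>"
  using spec[OF assms(1)[unfolded S1_def], of A] assms(2) that by blast

lemma Borel_omega_coversI:
  assumes "countable U" "\<And>u. u \<in> U \<Longrightarrow> u \<in> sets (restrict_space borel X)" "X \<notin> U"
    and "\<And>F. finite F \<Longrightarrow> F \<subseteq> X \<Longrightarrow> \<exists>u\<in>U. F \<subseteq> u"
  shows "U \<in> Borel_omega_covers X"
proof -
  have "\<Union>U \<subseteq> X"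
    using assms(2) sets_restrict_space_borel_subset by blast
  moreover have "X \<subseteq> \<Union>U"
  proof
    fix x assume "x \<in> X"
    then obtain u where "u \<in> U" "{x} \<subseteq> u"
      using assms(4)[of "{x}"] by blast
    then show "x \<in> \<Union>U" by blast
  qed
  ultimately show ?thesis
    using assms(1-4) unfolding Borel_omega_covers_def by auto
qed

definition one_outside :: "real set \<Rightarrow> real set \<Rightarrow> (real \<Rightarrow> real) \<Rightarrow> real \<Rightarrow> real" where
  "one_outside X u p = restrict (\<lambda>x. if x \<in> u then p x else 1) X"

lemma one_outside_Borel:
  assumes "u \<in> sets (restrict_space borel X)" "p \<in> Borel_functions X"
  shows "one_outside X u p \<in> Borel_functions X"
proof -
  have "u \<inter> space (restrict_space borel X) = u"
    using sets_restrict_space_borel_subset[OF assms(1)] by (auto simp: space_restrict_space)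
  then show ?thesis
    using assms unfolding one_outside_def
    by (intro restrict_in_Borel_functions measurable_If_set) (auto simp: Borel_functions_def)
qed

lemma countable_dense_one_outside:
  assumes U: "U \<in> Borel_omega_covers X" and P: "P \<in> countable_dense (BX_top X)"
  shows "(\<lambda>(u, p). one_outside X u p) ` (U \<times> P) \<in> countable_dense (BX_top X)"
proof -
  have "countable U" and U_Borel: "\<And>u. u \<in> U \<Longrightarrow> u \<in> sets (restrict_space borel X)"
    and U_omega: "\<And>F. finite F \<Longrightarrow> F \<subseteq> X \<Longrightarrow> \<exists>u\<in>U. F \<subseteq> u"
    using U unfolding Borel_omega_covers_def by blast+
  have "countable P" and P_Borel: "P \<subseteq> Borel_functions X"
    and P_approx: "\<And>h F e. h \<in> Borel_functions X \<Longrightarrow> finite F \<Longrightarrow> F \<subseteq> X \<Longrightarrow> e > 0 \<Longrightarrow>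
      \<exists>p\<in>P. \<forall>x\<in>F. \<bar>p x - h x\<bar> < e"
    using P unfolding countable_dense_BX_top_iff by blast+
  show ?thesis
    unfolding countable_dense_BX_top_iff
  proof (intro conjI ballI allI impI)
    show "countable ((\<lambda>(u, p). one_outside X u p) ` (U \<times> P))"
      using \<open>countable U\<close> \<open>countable P\<close> by (rule countable_image[OF countable_SIGMA])
    show "(\<lambda>(u, p). one_outside X u p) ` (U \<times> P) \<subseteq> Borel_functions X"
      using U_Borel P_Borel by (auto intro!: one_outside_Borel)
    fix h F and e :: real
    assume "h \<in> Borel_functions X" "finite F" "F \<subseteq> X" "e > 0"
    obtain u where "u \<in> U" "F \<subseteq> u"
      using U_omega \<open>finite F\<close> \<open>F \<subseteq> X\<close> by blast
    obtain p where "p \<in> P" and p: "\<forall>x\<in>F. \<bar>p x - h x\<bar> < e"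
      using P_approx \<open>h \<in> Borel_functions X\<close> \<open>finite F\<close> \<open>F \<subseteq> X\<close> \<open>e > 0\<close> by blast
    have "\<forall>x\<in>F. \<bar>one_outside X u p x - h x\<bar> < e"
      using p \<open>F \<subseteq> u\<close> \<open>F \<subseteq> X\<close> by (auto simp: one_outside_def subset_iff)
    moreover have "one_outside X u p \<in> (\<lambda>(u, p). one_outside X u p) ` (U \<times> P)"
      using \<open>u \<in> U\<close> \<open>p \<in> P\<close> by force
    ultimately show "\<exists>g\<in>(\<lambda>(u, p). one_outside X u p) ` (U \<times> P). \<forall>x\<in>F. \<bar>g x - h x\<bar> < e"
      by blast
  qed
qed

lemma dense_one_outside_covers_finite:
  assumes "range (\<lambda>n. one_outside X (u n) (p n)) \<in> countable_dense (BX_top X)"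
    and "finite F" "F \<subseteq> X"
  shows "\<exists>n. F \<subseteq> u n"
proof -
  obtain n where n: "\<forall>x\<in>F. \<bar>one_outside X (u n) (p n) x - restrict (\<lambda>_. 0) X x\<bar> < 1"
    using assms restrict_in_Borel_functions[of "\<lambda>_. 0" X]
    unfolding countable_dense_BX_top_iff by fastforce
  have "x \<in> u n" if "x \<in> F" for x
    using n that \<open>F \<subseteq> X\<close> by (force simp: one_outside_def split: if_splits)
  then show ?thesis by blast
qed

lemma S1_BX_top_imp_S1_Borel_omega_covers:
  assumes S1: "S1 (countable_dense (BX_top X)) (countable_dense (BX_top X))"
  shows "S1 (Borel_omega_covers X) (Borel_omega_covers X)"
  unfolding S1_def
proof (intro allI impI)
  fix U :: "nat \<Rightarrow> real set set" assume U: "\<forall>n. U n \<in> Borel_omega_covers X"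
  obtain P where P: "P \<in> countable_dense (BX_top X)"
    using ex_countable_dense_BX_top by blast
  obtain b where b: "\<And>n. b n \<in> (\<lambda>(u, p). one_outside X u p) ` (U n \<times> P)"
    and dense: "range b \<in> countable_dense (BX_top X)"
    using S1E[OF S1 countable_dense_one_outside[OF _ P]] U by blast
  have "\<forall>n. \<exists>w\<in>U n \<times> P. b n = (\<lambda>(u, p). one_outside X u p) w"
    using b by blast
  then obtain w where w: "\<And>n. w n \<in> U n \<times> P"
    and b_eq: "\<And>n. b n = one_outside X (fst (w n)) (snd (w n))"
    by (metis case_prod_beta)
  define u where "u n = fst (w n)" for n
  have u: "u n \<in> U n" for n
    using w[of n] by (auto simp: u_def)
  have "range u \<in> Borel_omega_covers X"
  proof (rule Borel_omega_coversI)
    show "countable (range u)"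
      by simp
    show "X \<notin> range u"
    proof
      assume "X \<in> range u"
      then obtain n where "X = u n" by blast
      with U[rule_format, of n] u[of n] show False
        by (simp add: Borel_omega_covers_def)
    qed
    show "v \<in> sets (restrict_space borel X)" if "v \<in> range u" for v
    proof -
      obtain n where "v = u n" using \<open>v \<in> range u\<close> by blast
      with U[rule_format, of n] u[of n] show ?thesis
        by (simp add: Borel_omega_covers_def)
    qed
    show "\<exists>v\<in>range u. F \<subseteq> v" if "finite F" "F \<subseteq> X" for F
      using dense_one_outside_covers_finite[OF _ that, of u "\<lambda>n. snd (w n)"] dense
      unfolding b_eq u_def by blast
  qed
  then show "\<exists>b. (\<forall>n. b n \<in> U n) \<and> range b \<in> Borel_omega_covers X"
    using u by blast
qed

lemma diagonal_selection:
  assumes "\<And>k m. C k m \<in> D (prod_encode (k, m))"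
  obtains b where "\<And>n. b n \<in> D n" "\<And>k. range (C k) \<subseteq> range b"
proof
  define b where "b n = C (fst (prod_decode n)) (snd (prod_decode n))" for n
  show "b n \<in> D n" for n
    using assms[of "fst (prod_decode n)" "snd (prod_decode n)"] by (simp add: b_def)
  show "range (C k) \<subseteq> range b" for k
  proof
    fix y assume "y \<in> range (C k)"
    then obtain m where "y = C k m" by blast
    then have "y = b (prod_encode (k, m))" by (simp add: b_def)
    then show "y \<in> range b" by blast
  qed
qed

lemma S1_countable_dense_if_selections_accumulate:
  assumes "topspace T \<noteq> {}"
    and accumulate: "\<And>(D :: nat \<Rightarrow> 'a set) f. (\<And>m. D m \<in> countable_dense T) \<Longrightarrow> f \<in> topspace T \<Longrightarrow>
      \<exists>c. (\<forall>m. c m \<in> D m) \<and> f \<in> T closure_of range c"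
  shows "S1 (countable_dense T) (countable_dense T)"
  unfolding S1_def
proof (intro allI impI)
  fix D :: "nat \<Rightarrow> 'a set" assume D: "\<forall>n. D n \<in> countable_dense T"
  then have D_sub: "D n \<subseteq> topspace T" for n
    by (simp add: countable_dense_def dense_in_def)
  have "D 0 \<noteq> {}" "countable (D 0)" and D0_dense: "T closure_of D 0 = topspace T"
    using D countable_dense_nonempty[OF assms(1)] by (auto simp: countable_dense_def dense_in_def)
  define d where "d = from_nat_into (D 0)"
  have d: "range d = D 0"
    using \<open>D 0 \<noteq> {}\<close> \<open>countable (D 0)\<close> by (simp add: d_def)
  have "\<forall>k. \<exists>c. (\<forall>m. c m \<in> D (prod_encode (k, m))) \<and> d k \<in> T closure_of range c"
  proof
    fix k
    show "\<exists>c. (\<forall>m. c m \<in> D (prod_encode (k, m))) \<and> d k \<in> T closure_of range c"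
    proof (rule accumulate)
      show "D (prod_encode (k, m)) \<in> countable_dense T" for m
        using D by blast
      show "d k \<in> topspace T"
        using d D_sub by blast
    qed
  qed
  from choice[OF this] obtain C where C_in: "\<And>k m. C k m \<in> D (prod_encode (k, m))"
    and C_closure: "\<And>k. d k \<in> T closure_of range (C k)"
    by blast
  obtain b where b: "\<And>n. b n \<in> D n" and C_b: "\<And>k. range (C k) \<subseteq> range b"
    using diagonal_selection[of C D, OF C_in] by blast
  have "D 0 \<subseteq> T closure_of range b"
    using C_b C_closure closure_of_mono unfolding d[symmetric] by blast
  then have "topspace T \<subseteq> T closure_of range b"
    using closure_of_minimal[OF _ closedin_closure_of] D0_dense by metis
  then have "T closure_of range b = topspace T"
    using closure_of_subset_topspace[of T "range b"] by blast
  moreover have "range b \<subseteq> topspace T"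
    using b D_sub by blast
  ultimately have "range b \<in> countable_dense T"
    by (simp add: countable_dense_def dense_in_def)
  then show "\<exists>b. (\<forall>n. b n \<in> D n) \<and> range b \<in> countable_dense T"
    using b by blast
qed

lemma selection_accumulates_shift:
  fixes N :: nat
  assumes "\<And>m. D m \<noteq> {}" "\<And>m. c m \<in> D (m + N)" "f \<in> T closure_of range c"
  shows "\<exists>c'. (\<forall>m. c' m \<in> D m) \<and> f \<in> T closure_of range c'"
proof -
  define c' where "c' m = (if N \<le> m then c (m - N) else SOME g. g \<in> D m)" for m
  have "c' m \<in> D m" for m
    using assms(2)[of "m - N"] some_in_eq[of "D m"] assms(1)[of m]
    by (cases "N \<le> m") (simp_all add: c'_def)
  moreover have "c m = c' (m + N)" for m
    by (simp add: c'_def)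
  then have "range c \<subseteq> range c'"
    by (metis image_subsetI rangeI)
  ultimately show ?thesis
    using assms(3) closure_of_mono by blast
qed

lemma selection_accumulates_uniform:
  assumes D: "\<And>m. D m \<in> countable_dense (BX_top X)" and f: "f \<in> Borel_functions X"
    and \<epsilon>: "\<epsilon> \<longlonglongrightarrow> 0"
    and uniform: "infinite {m. \<exists>g\<in>D m. \<forall>x\<in>X. \<bar>g x - f x\<bar> < \<epsilon> m}"
  shows "\<exists>c. (\<forall>m. c m \<in> D m) \<and> f \<in> BX_top X closure_of range c"
proof -
  let ?I = "{m. \<exists>g\<in>D m. \<forall>x\<in>X. \<bar>g x - f x\<bar> < \<epsilon> m}"
  have "\<forall>m. \<exists>g. g \<in> D m \<and> (m \<in> ?I \<longrightarrow> (\<forall>x\<in>X. \<bar>g x - f x\<bar> < \<epsilon> m))"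
  proof
    fix m
    show "\<exists>g. g \<in> D m \<and> (m \<in> ?I \<longrightarrow> (\<forall>x\<in>X. \<bar>g x - f x\<bar> < \<epsilon> m))"
    proof (cases "m \<in> ?I")
      case False
      obtain g where "g \<in> D m"
        using countable_dense_nonempty[OF topspace_BX_top_nonempty D] by blast
      with False show ?thesis by blast
    qed blast
  qed
  from choice[OF this] obtain c where c: "\<And>m. c m \<in> D m"
    and c_close: "\<And>m. m \<in> ?I \<Longrightarrow> \<forall>x\<in>X. \<bar>c m x - f x\<bar> < \<epsilon> m"
    by blast
  have "f \<in> BX_top X closure_of range c"
    unfolding in_closure_of_BX_top
  proof (intro conjI allI impI f)
    fix F and e :: real assume "finite F" "F \<subseteq> X" "e > 0"
    obtain K where K: "\<And>m. m \<ge> K \<Longrightarrow> \<epsilon> m < e"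
      using order_tendstoD(2)[OF \<epsilon> \<open>e > 0\<close>] by (auto simp: eventually_sequentially)
    obtain m where "m \<ge> K" "m \<in> ?I"
      using uniform unfolding infinite_nat_iff_unbounded_le by blast
    then have "\<forall>x\<in>F. \<bar>c m x - f x\<bar> < e"
      using c_close K \<open>F \<subseteq> X\<close> by force
    moreover have "c m \<in> Borel_functions X"
      using c D by (auto simp: countable_dense_BX_top_iff)
    ultimately show "\<exists>g\<in>range c \<inter> Borel_functions X. \<forall>x\<in>F. \<bar>g x - f x\<bar> < e"
      by blast
  qed
  then show ?thesis using c by blast
qed

lemma Borel_omega_cover_approximation_sets:
  assumes D: "D \<in> countable_dense (BX_top X)" and f: "f \<in> Borel_functions X" and "r > 0"
    and not_uniform: "\<And>g. g \<in> D \<Longrightarrow> \<exists>x\<in>X. r \<le> \<bar>g x - f x\<bar>"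
  shows "(\<lambda>g. {x\<in>X. \<bar>g x - f x\<bar> < r}) ` D \<in> Borel_omega_covers X"
proof (rule Borel_omega_coversI)
  have D_Borel: "D \<subseteq> Borel_functions X"
    and D_approx: "\<And>F. finite F \<Longrightarrow> F \<subseteq> X \<Longrightarrow> \<exists>g\<in>D. \<forall>x\<in>F. \<bar>g x - f x\<bar> < r"
    using D f \<open>r > 0\<close> unfolding countable_dense_BX_top_iff by blast+
  show "countable ((\<lambda>g. {x\<in>X. \<bar>g x - f x\<bar> < r}) ` D)"
    using D by (simp add: countable_dense_def)
  show "v \<in> sets (restrict_space borel X)" if "v \<in> (\<lambda>g. {x\<in>X. \<bar>g x - f x\<bar> < r}) ` D" for v
    using that D_Borel Borel_set_dist_less[OF _ f] by auto
  show "X \<notin> (\<lambda>g. {x\<in>X. \<bar>g x - f x\<bar> < r}) ` D"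
  proof
    assume "X \<in> (\<lambda>g. {x\<in>X. \<bar>g x - f x\<bar> < r}) ` D"
    then obtain g where "g \<in> D" and X_eq: "X = {x\<in>X. \<bar>g x - f x\<bar> < r}" by blast
    then obtain x where "x \<in> X" "r \<le> \<bar>g x - f x\<bar>"
      using not_uniform by blast
    moreover from \<open>x \<in> X\<close> have "x \<in> {x\<in>X. \<bar>g x - f x\<bar> < r}"
      by (subst X_eq[symmetric])
    ultimately show False by simp
  qed
  show "\<exists>v\<in>(\<lambda>g. {x\<in>X. \<bar>g x - f x\<bar> < r}) ` D. F \<subseteq> v" if F: "finite F" "F \<subseteq> X" for F
  proof -
    obtain g where "g \<in> D" "\<forall>x\<in>F. \<bar>g x - f x\<bar> < r"
      using D_approx[OF F] by blast
    then show ?thesis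
      using \<open>F \<subseteq> X\<close> by (intro bexI[OF _ imageI[OF \<open>g \<in> D\<close>]]) blast
  qed
qed

lemma Borel_omega_covers_range_large_index:
  fixes v :: "nat \<Rightarrow> real set" and K :: nat
  assumes cover: "range v \<in> Borel_omega_covers X" and "finite F" "F \<subseteq> X"
  shows "\<exists>k\<ge>K. F \<subseteq> v k"
proof -
  have "\<forall>j. \<exists>x. x \<in> X \<and> x \<notin> v j"
  proof
    fix j
    have "v j \<subseteq> X" "v j \<noteq> X"
      using cover unfolding Borel_omega_covers_def by blast+
    then show "\<exists>x. x \<in> X \<and> x \<notin> v j" by blast
  qed
  from choice[OF this] obtain w where w: "\<And>j. w j \<in> X" "\<And>j. w j \<notin> v j"
    by blast
  txt \<open>The witnesses \<open>w j\<close>, \<open>j < K\<close>, keep the members of index below \<open>K\<close> from covering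
    the enlarged set.\<close>
  have "finite (F \<union> w ` {..<K})"
    using \<open>finite F\<close> by simp
  moreover have "F \<union> w ` {..<K} \<subseteq> X"
    using \<open>F \<subseteq> X\<close> w(1) by (simp add: image_subset_iff)
  moreover have "\<And>G. finite G \<Longrightarrow> G \<subseteq> X \<Longrightarrow> \<exists>k. G \<subseteq> v k"
    using cover unfolding Borel_omega_covers_def by blast
  ultimately obtain k where k: "F \<union> w ` {..<K} \<subseteq> v k"
    by blast
  have "k \<ge> K"
  proof (rule ccontr)
    assume "\<not> k \<ge> K"
    then have "w k \<in> v k" using k by auto
    then show False using w(2) by blast
  qed
  then show ?thesis using k by blast
qed

lemma selection_accumulates_omega:
  assumes S1: "S1 (Borel_omega_covers X) (Borel_omega_covers X)"
    and D: "\<And>m. D m \<in> countable_dense (BX_top X)" and f: "f \<in> Borel_functions X"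
    and \<epsilon>_pos: "\<And>m. \<epsilon> m > 0" and \<epsilon>: "\<epsilon> \<longlonglongrightarrow> 0"
    and not_uniform: "\<And>m g. g \<in> D m \<Longrightarrow> \<exists>x\<in>X. \<epsilon> m \<le> \<bar>g x - f x\<bar>"
  shows "\<exists>c. (\<forall>m. c m \<in> D m) \<and> f \<in> BX_top X closure_of range c"
proof -
  define V where "V m = (\<lambda>g. {x\<in>X. \<bar>g x - f x\<bar> < \<epsilon> m})" for m
  have "V m ` D m \<in> Borel_omega_covers X" for m
    unfolding V_def using D f \<epsilon>_pos not_uniform by (rule Borel_omega_cover_approximation_sets)
  then obtain v where v: "\<And>m. v m \<in> V m ` D m" and cover: "range v \<in> Borel_omega_covers X"
    by (rule S1E[OF S1, where A = "\<lambda>m. V m ` D m"]) blast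
  have "\<forall>m. \<exists>g. g \<in> D m \<and> v m = V m g"
    using v by blast
  from choice[OF this] obtain c where c: "\<And>m. c m \<in> D m" and v_eq: "\<And>m. v m = V m (c m)"
    by blast
  have "f \<in> BX_top X closure_of range c"
    unfolding in_closure_of_BX_top
  proof (intro conjI allI impI f)
    fix F and e :: real assume "finite F" "F \<subseteq> X" "e > 0"
    obtain K where K: "\<And>m. m \<ge> K \<Longrightarrow> \<epsilon> m < e"
      using order_tendstoD(2)[OF \<epsilon> \<open>e > 0\<close>] by (auto simp: eventually_sequentially)
    obtain k where "k \<ge> K" "F \<subseteq> v k"
      using Borel_omega_covers_range_large_index[OF cover \<open>finite F\<close> \<open>F \<subseteq> X\<close>] by blast
    have "\<forall>x\<in>F. \<bar>c k x - f x\<bar> < e"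
    proof
      fix x assume "x \<in> F"
      then have "\<bar>c k x - f x\<bar> < \<epsilon> k"
        using \<open>F \<subseteq> v k\<close> v_eq[of k] by (auto simp: V_def)
      also have "\<epsilon> k < e"
        using K[OF \<open>k \<ge> K\<close>] .
      finally show "\<bar>c k x - f x\<bar> < e" .
    qed
    moreover have "c k \<in> Borel_functions X"
      using c D by (auto simp: countable_dense_BX_top_iff)
    ultimately show "\<exists>g\<in>range c \<inter> Borel_functions X. \<forall>x\<in>F. \<bar>g x - f x\<bar> < e"
      by blast
  qed
  then show ?thesis using c by blast
qed

lemma S1_Borel_omega_covers_selection_accumulates:
  fixes D :: "nat \<Rightarrow> (real \<Rightarrow> real) set"
  assumes S1: "S1 (Borel_omega_covers X) (Borel_omega_covers X)"
    and D: "\<And>m. D m \<in> countable_dense (BX_top X)" and f: "f \<in> Borel_functions X"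
  shows "\<exists>c. (\<forall>m. c m \<in> D m) \<and> f \<in> BX_top X closure_of range c"
proof (cases "finite {m. \<exists>g\<in>D m. \<forall>x\<in>X. \<bar>g x - f x\<bar> < inverse (real (Suc m))}")
  case True
  then obtain N where N: "\<And>m. \<exists>g\<in>D m. \<forall>x\<in>X. \<bar>g x - f x\<bar> < inverse (real (Suc m)) \<Longrightarrow> m < N"
    unfolding finite_nat_set_iff_bounded by blast
  have not_uniform: "\<exists>x\<in>X. inverse (real (Suc (m + N))) \<le> \<bar>g x - f x\<bar>"
    if "g \<in> D (m + N)" for m g
  proof (rule ccontr)
    assume "\<not> ?thesis"
    then have "m + N < N"
      using that by (intro N) (auto simp: not_le)
    then show False by simp
  qed
  have "\<exists>c. (\<forall>m. c m \<in> D (m + N)) \<and> f \<in> BX_top X closure_of range c"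
  proof (rule selection_accumulates_omega[OF S1 _ f,
        where D = "\<lambda>m. D (m + N)" and \<epsilon> = "\<lambda>m. inverse (real (Suc (m + N)))"])
    show "(\<lambda>m. inverse (real (Suc (m + N)))) \<longlonglongrightarrow> 0"
      by (rule LIMSEQ_ignore_initial_segment[OF LIMSEQ_inverse_real_of_nat])
  qed (use D not_uniform in auto)
  then obtain c where "\<And>m. c m \<in> D (m + N)" "f \<in> BX_top X closure_of range c"
    by blast
  then show ?thesis
    using countable_dense_nonempty[OF topspace_BX_top_nonempty D]
    by (intro selection_accumulates_shift[where N = N])
next
  case False
  then show ?thesis
    by (rule selection_accumulates_uniform[OF D f LIMSEQ_inverse_real_of_nat])
qed

theorem theorem3p3:
  fixes X :: "real set"
  shows "S1 (countable_dense (BX_top X)) (countable_dense (BX_top X)) \<longleftrightarrow>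
         S1 (Borel_omega_covers X) (Borel_omega_covers X)"
proof
  assume "S1 (countable_dense (BX_top X)) (countable_dense (BX_top X))"
  then show "S1 (Borel_omega_covers X) (Borel_omega_covers X)"
    by (rule S1_BX_top_imp_S1_Borel_omega_covers)
next
  assume S1: "S1 (Borel_omega_covers X) (Borel_omega_covers X)"
  show "S1 (countable_dense (BX_top X)) (countable_dense (BX_top X))"
  proof (rule S1_countable_dense_if_selections_accumulate[OF topspace_BX_top_nonempty])
    fix D :: "nat \<Rightarrow> (real \<Rightarrow> real) set" and f
    assume "\<And>m. D m \<in> countable_dense (BX_top X)" "f \<in> topspace (BX_top X)"
    then show "\<exists>c. (\<forall>m. c m \<in> D m) \<and> f \<in> BX_top X closure_of range c"
      unfolding topspace_BX_top by (rule S1_Borel_omega_covers_selection_accumulates[OF S1])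
  qed
qed

end
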